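(* Assume the standing conventions of the context and suppose $\mathcal D_{Z,Z'}\neq\emptyset$. (i) If $\Lambda\in\overline{\mathcal S}_Z$ and $\Lambda'_0\in B^+_\Lambda$, then $B^+_\Lambda=\{\Lambda'_0+\Lambda'\mid \Lambda'\in D_Z\}$. (ii) If $\Lambda'\in\overline{\mathcal S}_{Z'}$ and $\Lambda_0\in B^+_{\Lambda'}$, then $B^+_{\Lambda'}=\{\Lambda_0+\Lambda\mid\Lambda\in D_{Z'}\}$.
   Context: A symbol is an array $\Lambda=\binom{a'_1,\ldots,a'_{m_1}}{b'_1,\ldots,b'_{m_2}}$ of two strictly decreasing finite sequences of nonnegative integers (top row, bottom row); its defect is $\mathrm{def}(\Lambda)=m_1-m_2$. Standing assumptions: $Z=\binom{a_1,\ldots,a_{m+1}}{b_1,\ldots,b_m}$ is a special symbol of defect $1$, i.e. $a_1\ge b_1\ge a_2\ge b_2\ge\cdots\ge b_m\ge a_{m+1}$; $Z'=\binom{c_1,\ldots,c_{m'}}{d_1,\ldots,d_{m'}}$ is a special symbol of defect $0$, i.e. $c_1\ge d_1\ge c_2\ge d_2\ge\cdots\ge c_{m'}\ge d_{m'}$; and $m'\in\{m,m+1\}$. For a symbol $Y$, $Y_{\mathrm I}$ is the set of entries of $Y$ occurring in exactly one row. For $M\subset Z_{\mathrm I}$, $\Lambda_M$ is the symbol obtained from $Z$ by moving every entry of $M$ to the other row (rows re-sorted decreasingly); for $N\subset Z'_{\mathrm I}$, $\Lambda_N$ is obtained from $Z'$ in the same way. $\overline{\mathcal S}_Z=\{\Lambda_M: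 M\subset Z_{\mathrm I}\}$, $\overline{\mathcal S}_{Z'}=\{\Lambda_N:N\subset Z'_{\mathrm I}\}$; $\mathcal S_{Z,1}$ (resp. $\mathcal S_{Z',0}$) is the set of elements of $\overline{\mathcal S}_Z$ of defect $1$ (resp. of $\overline{\mathcal S}_{Z'}$ of defect $0$). Sum: $\Lambda_{M_1}+\Lambda_{M_2}:=\Lambda_{(M_1\cup M_2)\smallsetminus(M_1\cap M_2)}$ (for subsets of $Z_{\mathrm I}$, and likewise of $Z'_{\mathrm I}$). Relation $\overline{\mathcal B}^+_{Z,Z'}\subset\overline{\mathcal S}_Z\times\overline{\mathcal S}_{Z'}$: for $\Lambda=\binom{a'_1,\ldots,a'_{m_1}}{b'_1,\ldots,b'_{m_2}}\in\overline{\mathcal S}_Z$ and $\Lambda'=\binom{c'_1,\ldots,c'_{m'_1}}{d'_1,\ldots,d'_{m'_2}}\in\overline{\mathcal S}_{Z'}$, $(\Lambda,\Lambda')\in\overline{\mathcal B}^+_{Z,Z'}$ iff $\mathrm{def}(\Lambda')=1-\mathrm{def}(\Lambda)$ and: if $m'=m$, $a'_i>d'_i\ge a'_{i+1}$ for $1\le i\le m'_2$ and $b'_{i-1}>c'_i\ge b'_i$ for $1\le i\le m'_1$; if $m'=m+1$, $a'_i\ge d'_i>a'_{i+1}$ for $1\le i\le m'_2$ and $b'_{i-1}\ge c'_i>b'_i$ for $1\le i\le m'_1$; here $b'_0=+\infty$ and nonexistent entries $a'_j,b'_j$ beyond the row lengths are $-\infty$. Then $\mathcal D_{Z,Z'}=\overline{\mathcal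 B}^+_{Z,Z'}\cap(\mathcal S_{Z,1}\times\mathcal S_{Z',0})$, $D_Z=\{\Lambda'\mid (Z,\Lambda')\in\mathcal D_{Z,Z'}\}$, $D_{Z'}=\{\Lambda\mid(\Lambda,Z')\in\mathcal D_{Z,Z'}\}$, and for $\Lambda\in\overline{\mathcal S}_Z$, $\Lambda'\in\overline{\mathcal S}_{Z'}$: $B^+_\Lambda=\{\Lambda''\in\overline{\mathcal S}_{Z'}\mid(\Lambda,\Lambda'')\in\overline{\mathcal B}^+_{Z,Z'}\}$ and $B^+_{\Lambda'}=\{\Lambda''\in\overline{\mathcal S}_{Z}\mid(\Lambda'',\Lambda')\in\overline{\mathcal B}^+_{Z,Z'}\}$. *)

theory Defs
  imports Main "HOL-Library.Extended_Real"
begin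

text \<open>A symbol is a pair (top row, bottom row) of finite sets of natural numbers;
  each row is read as its strictly decreasing enumeration.\<close>
type_synonym symbol = "nat set \<times> nat set"

text \<open>The i-th largest entry (1-indexed) of a row; nonexistent entries are minus infinity.\<close>
definition entry :: "nat set \<Rightarrow> nat \<Rightarrow> ereal" where
  "entry S i = (if 1 \<le> i \<and> i \<le> card S
                then ereal (real (rev (sorted_list_of_set S) ! (i - 1))) else -\<infinity>)"

definition bentry :: "nat set \<Rightarrow> nat \<Rightarrow> ereal" where
  "bentry S i = (if i = 0 then \<infinity> else entry S i)"

definition defect :: "symbol \<Rightarrow> int" where
  "defect L = int (card (fst L)) - int (card (snd L))"

definition singles :: "symbol \<Rightarrow> nat set" where
  "singles L = (fst L - snd L) \<union> (snd L - fst L)"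

definition move :: "symbol \<Rightarrow> nat set \<Rightarrow> symbol" where
  "move L M = ((fst L - M) \<union> (snd L \<inter> M), (snd L - M) \<union> (fst L \<inter> M))"

definition Sbar :: "symbol \<Rightarrow> symbol set" where
  "Sbar L = {move L M | M. M \<subseteq> singles L}"

definition Sdef :: "symbol \<Rightarrow> int \<Rightarrow> symbol set" where
  "Sdef L k = {X \<in> Sbar L. defect X = k}"

text \<open>The set M with X = move Z M (valid for X in Sbar Z).\<close>
definition moved_set :: "symbol \<Rightarrow> symbol \<Rightarrow> nat set" where
  "moved_set Z X = (fst Z - fst X) \<union> (snd Z - snd X)"

definition sym_sum :: "symbol \<Rightarrow> symbol \<Rightarrow> symbol \<Rightarrow> symbol" where
  "sym_sum Z X Y = move Z ((moved_set Z X \<union> moved_set Z Y) - (moved_set Z X \<inter> moved_set Z Y))"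

definition special1 :: "symbol \<Rightarrow> bool" where
  "special1 Z \<longleftrightarrow> finite (fst Z) \<and> finite (snd Z) \<and> card (fst Z) = card (snd Z) + 1 \<and>
     (\<forall>i. 1 \<le> i \<and> i \<le> card (snd Z) \<longrightarrow>
        entry (snd Z) i \<le> entry (fst Z) i \<and> entry (fst Z) (i + 1) \<le> entry (snd Z) i)"

definition special0 :: "symbol \<Rightarrow> bool" where
  "special0 Z \<longleftrightarrow> finite (fst Z) \<and> finite (snd Z) \<and> card (fst Z) = card (snd Z) \<and>
     (\<forall>i. 1 \<le> i \<and> i \<le> card (snd Z) \<longrightarrow>
        entry (snd Z) i \<le> entry (fst Z) i \<and>
        (i < card (snd Z) \<longrightarrow> entry (fst Z) (i + 1) \<le> entry (snd Z) i))"

definition Bcond :: "nat \<Rightarrow> nat \<Rightarrow> symbol \<Rightarrow> symbol \<Rightarrow> bool" where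
  "Bcond m m' L L' \<longleftrightarrow> defect L' = 1 - defect L \<and>
    (if m' = m then
       (\<forall>i. 1 \<le> i \<and> i \<le> card (snd L') \<longrightarrow>
          entry (snd L') i < entry (fst L) i \<and> entry (fst L) (i + 1) \<le> entry (snd L') i) \<and>
       (\<forall>i. 1 \<le> i \<and> i \<le> card (fst L') \<longrightarrow>
          entry (fst L') i < bentry (snd L) (i - 1) \<and> entry (snd L) i \<le> entry (fst L') i)
     else
       (\<forall>i. 1 \<le> i \<and> i \<le> card (snd L') \<longrightarrow>
          entry (snd L') i \<le> entry (fst L) i \<and> entry (fst L) (i + 1) < entry (snd L') i) \<and>
       (\<forall>i. 1 \<le> i \<and> i \<le> card (fst L') \<longrightarrow>
          entry (fst L') i \<le> bentry (snd L) (i - 1) \<and> entry (snd L) i < entry (fst L') i))"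

definition Bbar :: "symbol \<Rightarrow> symbol \<Rightarrow> (symbol \<times> symbol) set" where
  "Bbar Z Z' = {(L, L'). L \<in> Sbar Z \<and> L' \<in> Sbar Z' \<and> Bcond (card (snd Z)) (card (snd Z')) L L'}"

definition Dset :: "symbol \<Rightarrow> symbol \<Rightarrow> (symbol \<times> symbol) set" where
  "Dset Z Z' = Bbar Z Z' \<inter> (Sdef Z 1 \<times> Sdef Z' 0)"

definition D_Z :: "symbol \<Rightarrow> symbol \<Rightarrow> symbol set" where
  "D_Z Z Z' = {L'. (Z, L') \<in> Dset Z Z'}"

definition D_Z' :: "symbol \<Rightarrow> symbol \<Rightarrow> symbol set" where
  "D_Z' Z Z' = {L. (L, Z') \<in> Dset Z Z'}"

definition Bplus_left :: "symbol \<Rightarrow> symbol \<Rightarrow> symbol \<Rightarrow> symbol set" where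
  "Bplus_left Z Z' L = {L''. (L, L'') \<in> Bbar Z Z'}"

definition Bplus_right :: "symbol \<Rightarrow> symbol \<Rightarrow> symbol \<Rightarrow> symbol set" where
  "Bplus_right Z Z' L' = {L''. (L'', L') \<in> Bbar Z Z'}"

end

(*
  Encode every row by its counting function x |-> #{s in row. x <= s}. Moving entries of Z_I
  preserves the total count of both rows, so bottom rows are determined by top rows, and the
  interlacing inequalities defining B^+ say that the counting function of the interleaved top
  rows of Lambda and Lambda' is a lattice path in a strip of width one above the interleaved
  total counts of Z and Z'.

  Moving a set of singles toggles membership in the top row. The counting function of the
  symmetric difference of three sets has the parity of the sum of their counting functions,
  and a descending induction along the strip shows that it stays in the strip when the three
  given paths do. So the pairs (M, N) with (Lambda_M, Lambda'_N) in B^+ are closed under ternary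
  symmetric differences. As D_{Z,Z'} is nonempty, some path fits into the strip, hence also the
  path of (Z, Z') itself. The pairs therefore form a linear subspace over the field with two
  elements, and B^+_Lambda, B^+_Lambda' are translates of its fibres over the empty set, which
  are D_Z and D_Z'.
*)

theory Submission
  imports Defs
begin

section \<open>Counting functions of rows\<close>

definition count_ge :: "nat set \<Rightarrow> nat \<Rightarrow> nat" where
  "count_ge S x = card {s \<in> S. x \<le> s}"

lemma count_ge_le_card: "finite S \<Longrightarrow> count_ge S x \<le> card S"
  unfolding count_ge_def by (intro card_mono) auto

lemma count_ge_0 [simp]: "count_ge S 0 = card S"
  unfolding count_ge_def by simp

lemma count_ge_antimono: "finite S \<Longrightarrow> x \<le> y \<Longrightarrow> count_ge S y \<le> count_ge S x"
  unfolding count_ge_def by (intro card_mono) auto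

lemma count_ge_Suc:
  assumes "finite S"
  shows "count_ge S x = count_ge S (Suc x) + (if x \<in> S then 1 else 0)"
proof -
  have "{s \<in> S. x \<le> s} = {s \<in> S. Suc x \<le> s} \<union> (if x \<in> S then {x} else {})"
    by (auto simp: Suc_le_eq order_le_less)
  then show ?thesis
    using assms by (auto simp: count_ge_def card_insert_if)
qed

lemma count_ge_add:
  assumes "finite P" "finite Q"
  shows "count_ge P x + count_ge Q x = count_ge (P \<union> Q) x + count_ge (P \<inter> Q) x"
proof -
  have "{s \<in> P \<union> Q. x \<le> s} = {s \<in> P. x \<le> s} \<union> {s \<in> Q. x \<le> s}"
    and "{s \<in> P \<inter> Q. x \<le> s} = {s \<in> P. x \<le> s} \<inter> {s \<in> Q. x \<le> s}"
    by auto
  then show ?thesis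
    using card_Un_Int[of "{s \<in> P. x \<le> s}" "{s \<in> Q. x \<le> s}"] assms
    by (simp add: count_ge_def)
qed

lemma eventually_count_ge_eq_0:
  assumes "finite S"
  shows "\<forall>\<^sub>F x in sequentially. count_ge S x = 0"
proof -
  have "count_ge S x = 0" if "Suc (Max S) \<le> x" for x
  proof -
    have "{s \<in> S. x \<le> s} = {}"
      using that Max_ge[OF assms] by fastforce
    then show ?thesis
      unfolding count_ge_def by (metis card.empty)
  qed
  then show ?thesis
    by (auto simp: eventually_sequentially)
qed

lemma sorted_desc_nth_ge_iff:
  fixes l :: "nat list"
  assumes dec: "sorted_wrt (>) l" and "i < length l"
  shows "x \<le> l ! i \<longleftrightarrow> i < card {j. j < length l \<and> x \<le> l ! j}"
proof -
  define J where "J = {j. j < length l \<and> x \<le> l ! j}"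
  have nth_le: "l ! k \<le> l ! j" if "j \<le> k" "k < length l" for j k
    using that dec sorted_wrt_nth_less[of "(>)" l j k] by (cases "j = k") auto
  have "finite J"
    by (simp add: J_def)
  show ?thesis
    unfolding J_def[symmetric]
  proof
    assume "x \<le> l ! i"
    have "{..i} \<subseteq> J"
    proof
      fix j assume "j \<in> {..i}"
      then have "j \<le> i" "j < length l"
        using assms(2) by auto
      then show "j \<in> J"
        using nth_le[of j i] assms(2) \<open>x \<le> l ! i\<close> by (simp add: J_def)
    qed
    then show "i < card J"
      using card_mono[OF \<open>finite J\<close>, of "{..i}"] by simp
  next
    assume "i < card J"
    show "x \<le> l ! i"
    proof (rule ccontr)
      assume "\<not> x \<le> l ! i"
      have "J \<subseteq> {..<i}"
      proof
        fix j assume "j \<in> J"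
        then have "j < length l" "x \<le> l ! j"
          by (auto simp: J_def)
        then show "j \<in> {..<i}"
          using nth_le[of i j] \<open>\<not> x \<le> l ! i\<close> by (cases "i \<le> j") auto
      qed
      then show False
        using card_mono[of "{..<i}" J] \<open>i < card J\<close> by simp
    qed
  qed
qed

lemma ereal_le_entry_iff:
  assumes "finite S" and "1 \<le> i"
  shows "ereal (real x) \<le> entry S i \<longleftrightarrow> i \<le> count_ge S x"
proof -
  define l where "l = rev (sorted_list_of_set S)"
  have len: "length l = card S"
    by (simp add: l_def)
  have dec: "sorted_wrt (>) l"
    using strict_sorted_list_of_set[of S] by (simp add: l_def sorted_wrt_rev)
  have "count_ge S x = length (filter (\<lambda>s. x \<le> s) l)"
    using assms(1) by (simp add: count_ge_def l_def distinct_length_filter Collect_conj_eq Int_commute)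
  then have count: "count_ge S x = card {j. j < length l \<and> x \<le> l ! j}"
    by (simp add: length_filter_conv_card)
  show ?thesis
  proof (cases "i \<le> card S")
    case True
    then have "ereal (real x) \<le> entry S i \<longleftrightarrow> x \<le> l ! (i - 1)"
      using assms(2) by (simp add: entry_def l_def)
    also have "\<dots> \<longleftrightarrow> i - 1 < card {j. j < length l \<and> x \<le> l ! j}"
      using True assms(2) len by (intro sorted_desc_nth_ge_iff[OF dec]) simp
    also have "\<dots> \<longleftrightarrow> i \<le> count_ge S x"
      unfolding count using assms(2) by presburger
    finally show ?thesis .
  next
    case False
    have "count_ge S x \<le> card S"
      using assms(1) by (rule count_ge_le_card)
    then show ?thesis
      using False by (simp add: entry_def)
  qed
qed

lemma entry_beyond_card: "card S < i \<Longrightarrow> entry S i = -\<infinity>"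
  by (simp add: entry_def)

lemma entry_in_range:
  assumes "1 \<le> i" "i \<le> card S"
  obtains v where "entry S i = ereal (real v)"
  using assms that[of "rev (sorted_list_of_set S) ! (i - 1)"] by (simp add: entry_def)

lemma entry_less_PInf [simp]: "entry S i < \<infinity>"
  by (simp add: entry_def)

lemma ereal_less_entry_iff: "ereal (real v) < entry S j \<longleftrightarrow> ereal (real (Suc v)) \<le> entry S j"
  by (auto simp: entry_def)

lemma entry_le_entry_iff:
  assumes "finite X" "finite Y" "1 \<le> i" "1 \<le> j"
  shows "entry X i \<le> entry Y j \<longleftrightarrow> (\<forall>x. i \<le> count_ge X x \<longrightarrow> j \<le> count_ge Y x)"
proof
  assume "entry X i \<le> entry Y j"
  then show "\<forall>x. i \<le> count_ge X x \<longrightarrow> j \<le> count_ge Y x"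
    using ereal_le_entry_iff[OF assms(1,3)] ereal_le_entry_iff[OF assms(2,4)] order_trans by blast
next
  assume counts: "\<forall>x. i \<le> count_ge X x \<longrightarrow> j \<le> count_ge Y x"
  show "entry X i \<le> entry Y j"
  proof (cases "i \<le> card X")
    case True
    obtain v where v: "entry X i = ereal (real v)"
      using assms(3) True by (rule entry_in_range)
    then have "i \<le> count_ge X v"
      using ereal_le_entry_iff[OF assms(1,3), of v] by simp
    then show ?thesis
      using counts ereal_le_entry_iff[OF assms(2,4)] v by simp
  qed (simp add: entry_beyond_card)
qed

lemma entry_less_entry_iff:
  assumes "finite X" "finite Y" "1 \<le> i" "i \<le> card X" "1 \<le> j"
  shows "entry X i < entry Y j \<longleftrightarrow> (\<forall>x. i \<le> count_ge X x \<longrightarrow> j \<le> count_ge Y (Suc x))"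
proof -
  obtain v where v: "entry X i = ereal (real v)"
    using assms(3,4) by (rule entry_in_range)
  have le_v: "i \<le> count_ge X x \<longleftrightarrow> x \<le> v" for x
    using ereal_le_entry_iff[OF assms(1,3)] v by simp
  have "entry X i < entry Y j \<longleftrightarrow> j \<le> count_ge Y (Suc v)"
    unfolding v ereal_less_entry_iff by (rule ereal_le_entry_iff[OF assms(2,5)])
  also have "\<dots> \<longleftrightarrow> (\<forall>x. i \<le> count_ge X x \<longrightarrow> j \<le> count_ge Y (Suc x))"
    using le_v count_ge_antimono[OF assms(2)] by (meson Suc_le_mono le_trans order_refl)
  finally show ?thesis .
qed

lemma entry_shift_le_iff:
  assumes "finite S" "finite T"
  shows "(\<forall>i\<ge>1. entry S (i + k) \<le> entry T i) \<longleftrightarrow> (\<forall>x. count_ge S x \<le> count_ge T x + k)"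
proof
  assume entries: "\<forall>i\<ge>1. entry S (i + k) \<le> entry T i"
  show "\<forall>x. count_ge S x \<le> count_ge T x + k"
  proof
    fix x
    show "count_ge S x \<le> count_ge T x + k"
    proof (cases "count_ge S x \<le> k")
      case False
      then have "count_ge S x - k \<le> count_ge T x"
        using entries[rule_format, of "count_ge S x - k"]
          entry_le_entry_iff[OF assms, of "count_ge S x - k + k" "count_ge S x - k"] by simp
      then show ?thesis
        by simp
    qed simp
  qed
next
  assume counts: "\<forall>x. count_ge S x \<le> count_ge T x + k"
  show "\<forall>i\<ge>1. entry S (i + k) \<le> entry T i"
  proof (intro allI impI)
    fix i :: nat assume "1 \<le> i"
    have "\<forall>x. i + k \<le> count_ge S x \<longrightarrow> i \<le> count_ge T x"
      using counts by (metis add_le_cancel_right le_trans)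
    then show "entry S (i + k) \<le> entry T i"
      using entry_le_entry_iff[OF assms, of "i + k" i] \<open>1 \<le> i\<close> by simp
  qed
qed

lemma entry_shift_less_iff:
  assumes "finite S" "finite T"
  shows "(\<forall>i. 1 \<le> i \<and> i + k \<le> card S \<longrightarrow> entry S (i + k) < entry T i) \<longleftrightarrow>
    (\<forall>x. count_ge S x \<le> count_ge T (Suc x) + k)"
proof
  assume entries: "\<forall>i. 1 \<le> i \<and> i + k \<le> card S \<longrightarrow> entry S (i + k) < entry T i"
  show "\<forall>x. count_ge S x \<le> count_ge T (Suc x) + k"
  proof
    fix x
    show "count_ge S x \<le> count_ge T (Suc x) + k"
    proof (cases "count_ge S x \<le> k")
      case False
      then have "count_ge S x - k \<le> count_ge T (Suc x)"
        using entries[rule_format, of "count_ge S x - k"] count_ge_le_card[OF assms(1), of x]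
          entry_less_entry_iff[OF assms, of "count_ge S x - k + k" "count_ge S x - k"] by simp
      then show ?thesis
        by simp
    qed simp
  qed
next
  assume counts: "\<forall>x. count_ge S x \<le> count_ge T (Suc x) + k"
  show "\<forall>i. 1 \<le> i \<and> i + k \<le> card S \<longrightarrow> entry S (i + k) < entry T i"
  proof (intro allI impI, elim conjE)
    fix i :: nat assume "1 \<le> i" "i + k \<le> card S"
    have "\<forall>x. i + k \<le> count_ge S x \<longrightarrow> i \<le> count_ge T (Suc x)"
      using counts by (metis add_le_cancel_right le_trans)
    then show "entry S (i + k) < entry T i"
      using entry_less_entry_iff[OF assms, of "i + k" i] \<open>1 \<le> i\<close> \<open>i + k \<le> card S\<close> by simp
  qed
qed

lemma entry_shift_le_bounded_left:
  "(\<forall>i. 1 \<le> i \<and> i + k \<le> card S \<longrightarrow> entry S (i + k) \<le> entry T i) \<longleftrightarrow>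
    (\<forall>i\<ge>1. entry S (i + k) \<le> entry T i)"
proof -
  have "entry S (i + k) \<le> entry T i" if "card S < i + k" for i
    using entry_beyond_card[OF that] by simp
  then show ?thesis
    by (meson not_le)
qed

lemma entry_shift_le_bounded_right:
  assumes "card S \<le> card T + k"
  shows "(\<forall>i. 1 \<le> i \<and> i \<le> card T \<longrightarrow> entry S (i + k) \<le> entry T i) \<longleftrightarrow>
    (\<forall>i\<ge>1. entry S (i + k) \<le> entry T i)"
proof -
  have "entry S (i + k) \<le> entry T i" if "card T < i" for i
    using entry_beyond_card[of S "i + k"] that assms by simp
  then show ?thesis
    by (meson not_le)
qed

lemma entry_shift_less_bounded_right:
  assumes "card S < card T + k"
  shows "(\<forall>i. 1 \<le> i \<and> i \<le> card T \<longrightarrow> entry S (i + k) < entry T i) \<longleftrightarrow>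
    (\<forall>i. 1 \<le> i \<and> i + k \<le> card S \<longrightarrow> entry S (i + k) < entry T i)"
proof -
  have "entry S (i + k) < entry T i" if "1 \<le> i" "i \<le> card T" "card S < i + k" for i
    using entry_beyond_card[OF that(3)] entry_in_range[OF that(1,2)] by fastforce
  with assms show ?thesis
    by (meson add_le_cancel_right le_trans less_imp_le_nat not_le)
qed

lemma all_bentry_shift_iff:
  assumes "\<And>j. R (entry S j) \<infinity>"
  shows "(\<forall>i. 1 \<le> i \<and> i \<le> n \<longrightarrow> R (entry S i) (bentry T (i - 1))) \<longleftrightarrow>
    (\<forall>i. 1 \<le> i \<and> i + 1 \<le> n \<longrightarrow> R (entry S (i + 1)) (entry T i))"
proof (intro iffI allI impI; elim conjE)
  fix i :: nat
  assume "\<forall>i. 1 \<le> i \<and> i \<le> n \<longrightarrow> R (entry S i) (bentry T (i - 1))" "1 \<le> i" "i + 1 \<le> n"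
  then show "R (entry S (i + 1)) (entry T i)"
    by (auto simp: bentry_def)
next
  fix i :: nat
  assume shifted: "\<forall>i. 1 \<le> i \<and> i + 1 \<le> n \<longrightarrow> R (entry S (i + 1)) (entry T i)"
    and "1 \<le> i" "i \<le> n"
  show "R (entry S i) (bentry T (i - 1))"
  proof (cases "i = 1")
    case False
    then have "i - 1 \<noteq> 0" "1 \<le> i - 1" "i - 1 + 1 = i"
      using \<open>1 \<le> i\<close> \<open>i \<le> n\<close> by auto
    then show ?thesis
      using shifted[rule_format, of "i - 1"] \<open>1 \<le> i\<close> \<open>i \<le> n\<close> False by (simp add: bentry_def)
  qed (simp add: bentry_def assms)
qed

section \<open>The relation B^+ as a lattice path condition\<close>

lemma Bcond_same_rank_iff:
  fixes A B C D :: "nat set"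
  assumes fin: "finite A" "finite B" "finite C" "finite D"
    and cards: "card A + card B = card C + card D + 1"
  shows "Bcond m m (A, B) (C, D) \<longleftrightarrow>
    (\<forall>x. count_ge B x \<le> count_ge C x \<and> count_ge A x \<le> count_ge D x + 1 \<and>
         count_ge D x \<le> count_ge A (Suc x) \<and> count_ge C x \<le> count_ge B (Suc x) + 1)"
    (is "_ \<longleftrightarrow> (\<forall>x. ?counts x)")
proof -
  have defect: "defect (C, D) = 1 - defect (A, B) \<longleftrightarrow> card B = card C \<and> card A = card D + 1"
    using cards by (simp add: defect_def) linarith
  have entries:
    "(\<forall>i. 1 \<le> i \<and> i \<le> card D \<longrightarrow> entry D i < entry A i \<and> entry A (i + 1) \<le> entry D i) \<and>
     (\<forall>i. 1 \<le> i \<and> i \<le> card C \<longrightarrow> entry C i < bentry B (i - 1) \<and> entry B i \<le> entry C i)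
     \<longleftrightarrow> (\<forall>x. ?counts x)"
    if "card B = card C" "card A = card D + 1"
  proof -
    have "(\<forall>i. 1 \<le> i \<and> i \<le> card D \<longrightarrow> entry D i < entry A i) \<longleftrightarrow>
        (\<forall>x. count_ge D x \<le> count_ge A (Suc x))"
      using entry_shift_less_iff[OF fin(4,1), of 0] by simp
    moreover have "(\<forall>i. 1 \<le> i \<and> i \<le> card D \<longrightarrow> entry A (i + 1) \<le> entry D i) \<longleftrightarrow>
        (\<forall>x. count_ge A x \<le> count_ge D x + 1)"
      using entry_shift_le_bounded_right[of A D 1] entry_shift_le_iff[OF fin(1,4), of 1] that by simp
    moreover have "(\<forall>i. 1 \<le> i \<and> i \<le> card C \<longrightarrow> entry C i < bentry B (i - 1)) \<longleftrightarrow>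
        (\<forall>x. count_ge C x \<le> count_ge B (Suc x) + 1)"
      using all_bentry_shift_iff[of "(<)" C, OF entry_less_PInf, of "card C" B] entry_shift_less_iff[OF fin(3,2), of 1] by simp
    moreover have "(\<forall>i. 1 \<le> i \<and> i \<le> card C \<longrightarrow> entry B i \<le> entry C i) \<longleftrightarrow>
        (\<forall>x. count_ge B x \<le> count_ge C x)"
      using entry_shift_le_bounded_right[of B C 0] entry_shift_le_iff[OF fin(2,3), of 0] that by simp
    ultimately show ?thesis
      by blast
  qed
  have "card B = card C \<and> card A = card D + 1" if "\<forall>x. ?counts x"
    using that[rule_format, of 0] cards by simp
  then show ?thesis
    unfolding Bcond_def using defect entries by auto
qed

lemma Bcond_next_rank_iff:
  fixes A B C D :: "nat set"
  assumes fin: "finite A" "finite B" "finite C" "finite D"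
    and "m' \<noteq> m"
    and cards: "card A + card B + 1 = card C + card D"
  shows "Bcond m m' (A, B) (C, D) \<longleftrightarrow>
    (\<forall>x. count_ge D x \<le> count_ge A x \<and> count_ge C x \<le> count_ge B x + 1 \<and>
         count_ge B x \<le> count_ge C (Suc x) \<and> count_ge A x \<le> count_ge D (Suc x) + 1)"
    (is "_ \<longleftrightarrow> (\<forall>x. ?counts x)")
proof -
  have defect: "defect (C, D) = 1 - defect (A, B) \<longleftrightarrow> card C = card B + 1 \<and> card A = card D"
    using cards by (simp add: defect_def) linarith
  have entries:
    "(\<forall>i. 1 \<le> i \<and> i \<le> card D \<longrightarrow> entry D i \<le> entry A i \<and> entry A (i + 1) < entry D i) \<and>
     (\<forall>i. 1 \<le> i \<and> i \<le> card C \<longrightarrow> entry C i \<le> bentry B (i - 1) \<and> entry B i < entry C i)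
     \<longleftrightarrow> (\<forall>x. ?counts x)"
    if "card C = card B + 1" "card A = card D"
  proof -
    have "(\<forall>i. 1 \<le> i \<and> i \<le> card D \<longrightarrow> entry D i \<le> entry A i) \<longleftrightarrow>
        (\<forall>x. count_ge D x \<le> count_ge A x)"
      using entry_shift_le_bounded_left[of 0 D A] entry_shift_le_iff[OF fin(4,1), of 0] by simp
    moreover have "(\<forall>i. 1 \<le> i \<and> i \<le> card D \<longrightarrow> entry A (i + 1) < entry D i) \<longleftrightarrow>
        (\<forall>x. count_ge A x \<le> count_ge D (Suc x) + 1)"
      using entry_shift_less_bounded_right[of A D 1] entry_shift_less_iff[OF fin(1,4), of 1] that by simp
    moreover have "(\<forall>i. 1 \<le> i \<and> i \<le> card C \<longrightarrow> entry C i \<le> bentry B (i - 1)) \<longleftrightarrow>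
        (\<forall>x. count_ge C x \<le> count_ge B x + 1)"
      using all_bentry_shift_iff[of "(\<le>)" C "card C" B] entry_shift_le_bounded_left[of 1 C B]
        entry_shift_le_iff[OF fin(3,2), of 1] by simp
    moreover have "(\<forall>i. 1 \<le> i \<and> i \<le> card C \<longrightarrow> entry B i < entry C i) \<longleftrightarrow>
        (\<forall>x. count_ge B x \<le> count_ge C (Suc x))"
      using entry_shift_less_bounded_right[of B C 0] entry_shift_less_iff[OF fin(2,3), of 0] that by simp
    ultimately show ?thesis
      by blast
  qed
  have "card C = card B + 1 \<and> card A = card D" if "\<forall>x. ?counts x"
    using that[rule_format, of 0] cards by simp
  then show ?thesis
    unfolding Bcond_def using defect entries \<open>m' \<noteq> m\<close> by auto
qed

definition total_count :: "symbol \<Rightarrow> nat \<Rightarrow> nat" where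
  "total_count L x = count_ge (fst L) x + count_ge (snd L) x"

text \<open>The top row of Lambda is placed on the even positions, that of Lambda' on the odd ones.\<close>

definition interleave :: "nat set \<Rightarrow> nat set \<Rightarrow> nat set" where
  "interleave A C = (\<lambda>a. 2 * a) ` A \<union> (\<lambda>c. 2 * c + 1) ` C"

definition lower_path :: "symbol \<Rightarrow> symbol \<Rightarrow> nat \<Rightarrow> nat" where
  "lower_path Z Z' t = (if even t then total_count Z (t div 2) else total_count Z' (t div 2))"

definition in_strip :: "(nat \<Rightarrow> nat) \<Rightarrow> (nat \<Rightarrow> nat) \<Rightarrow> bool" where
  "in_strip L W \<longleftrightarrow> (\<forall>t. L t \<le> W t \<and> W t \<le> L (Suc t) + 1)"

definition interleave_in_strip :: "symbol \<Rightarrow> symbol \<Rightarrow> nat set \<Rightarrow> nat set \<Rightarrow> bool" where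
  "interleave_in_strip Z Z' A C \<longleftrightarrow>
    in_strip (lower_path Z Z') (count_ge (interleave A C))"

lemma mem_interleave: "t \<in> interleave A C \<longleftrightarrow> (if even t then t div 2 \<in> A else t div 2 \<in> C)"
  by (auto simp: interleave_def elim: evenE oddE)

lemma count_ge_interleave:
  assumes "finite A" "finite C"
  shows "count_ge (interleave A C) t = count_ge A ((t + 1) div 2) + count_ge C (t div 2)"
proof -
  define A' where "A' = {a \<in> A. (t + 1) div 2 \<le> a}"
  define C' where "C' = {c \<in> C. t div 2 \<le> c}"
  have "{s \<in> interleave A C. t \<le> s} = (\<lambda>a. 2 * a) ` A' \<union> (\<lambda>c. 2 * c + 1) ` C'"
    by (auto simp: interleave_def A'_def C'_def)
  moreover have "(\<lambda>a. 2 * a) ` A' \<inter> (\<lambda>c. 2 * c + 1) ` C' = {}"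
    by auto presburger
  moreover have "card ((\<lambda>a. 2 * a) ` A') = card A'" "card ((\<lambda>c. 2 * c + 1) ` C') = card C'"
    by (auto intro!: card_image inj_onI)
  moreover have "finite A'" "finite C'"
    using assms by (simp_all add: A'_def C'_def)
  ultimately show ?thesis
    unfolding count_ge_def A'_def[symmetric] C'_def[symmetric] by (simp add: card_Un_disjoint)
qed

lemma all_nat_even_odd: "(\<forall>t::nat. P t) \<longleftrightarrow> (\<forall>x. P (2 * x) \<and> P (2 * x + 1))"
proof (intro iffI allI)
  fix t :: nat
  assume "\<forall>x. P (2 * x) \<and> P (2 * x + 1)"
  then show "P t"
    by (cases "even t") (auto elim!: evenE oddE)
qed simp

lemma interleave_in_strip_iff:
  assumes "finite A" "finite C"
  shows "interleave_in_strip Z Z' A C \<longleftrightarrow>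
    (\<forall>x. total_count Z x \<le> count_ge A x + count_ge C x \<and>
         count_ge A x + count_ge C x \<le> total_count Z' x + 1 \<and>
         total_count Z' x \<le> count_ge A (Suc x) + count_ge C x \<and>
         count_ge A (Suc x) + count_ge C x \<le> total_count Z (Suc x) + 1)"
  unfolding interleave_in_strip_def in_strip_def
  by (subst all_nat_even_odd) (simp add: count_ge_interleave[OF assms] lower_path_def)

lemma total_count_move:
  assumes "M \<subseteq> singles Z" "finite (fst Z)" "finite (snd Z)"
  shows "total_count (move Z M) = total_count Z"
proof
  fix x
  have "fst (move Z M) \<union> snd (move Z M) = fst Z \<union> snd Z"
    and "fst (move Z M) \<inter> snd (move Z M) = fst Z \<inter> snd Z"
    using assms(1) by (auto simp: move_def singles_def)
  moreover have "finite (fst (move Z M))" "finite (snd (move Z M))"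
    using assms(2,3) by (auto simp: move_def)
  ultimately show "total_count (move Z M) x = total_count Z x"
    using count_ge_add[of "fst (move Z M)" "snd (move Z M)" x] count_ge_add[of "fst Z" "snd Z" x] assms(2,3)
    by (simp add: total_count_def)
qed

text \<open>Since total counts are invariant, the bottom rows are determined by the top rows. For
  m' = m + 1 the roles of Z and Z' are exchanged: then Lambda' occupies the even positions.\<close>

lemma Bcond_iff_interleave_in_strip:
  fixes Z Z' L L' :: symbol
  assumes fin: "finite (fst L)" "finite (snd L)" "finite (fst L')" "finite (snd L')"
    and total: "total_count L = total_count Z" "total_count L' = total_count Z'"
    and Z: "card (fst Z) = card (snd Z) + 1" and Z': "card (fst Z') = card (snd Z')"
    and ranks: "card (snd Z') = card (snd Z) \<or> card (snd Z') = card (snd Z) + 1"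
  shows "Bcond (card (snd Z)) (card (snd Z')) L L' \<longleftrightarrow>
    (if card (snd Z') = card (snd Z) then interleave_in_strip Z Z' (fst L) (fst L')
     else interleave_in_strip Z' Z (fst L') (fst L))"
proof -
  obtain A B C D where L: "L = (A, B)" and L': "L' = (C, D)"
    by fastforce
  have counts: "total_count Z x = count_ge A x + count_ge B x"
    "total_count Z' x = count_ge C x + count_ge D x" for x
    using total by (metis L L' fst_conv snd_conv total_count_def)+
  have cards: "card A + card B = 2 * card (snd Z) + 1" "card C + card D = 2 * card (snd Z')"
    using counts(1)[of 0] counts(2)[of 0] Z Z' by (simp_all add: total_count_def)
  have fin': "finite A" "finite B" "finite C" "finite D"
    using fin by (simp_all add: L L')
  show ?thesis
  proof (cases "card (snd Z') = card (snd Z)")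
    case True
    have "Bcond (card (snd Z)) (card (snd Z')) L L' \<longleftrightarrow>
      (\<forall>x. count_ge B x \<le> count_ge C x \<and> count_ge A x \<le> count_ge D x + 1 \<and>
           count_ge D x \<le> count_ge A (Suc x) \<and> count_ge C x \<le> count_ge B (Suc x) + 1)"
      unfolding L L' True using cards True by (intro Bcond_same_rank_iff fin') simp
    also have "\<dots> \<longleftrightarrow> interleave_in_strip Z Z' A C"
      unfolding interleave_in_strip_iff[OF fin'(1,3)] counts by simp
    finally show ?thesis
      using True by (simp add: L L')
  next
    case False
    then have "card (snd Z') = card (snd Z) + 1"
      using ranks by simp
    have "Bcond (card (snd Z)) (card (snd Z')) L L' \<longleftrightarrow>
      (\<forall>x. count_ge D x \<le> count_ge A x \<and> count_ge C x \<le> count_ge B x + 1 \<and>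
           count_ge B x \<le> count_ge C (Suc x) \<and> count_ge A x \<le> count_ge D (Suc x) + 1)"
      unfolding L L' using cards False \<open>card (snd Z') = card (snd Z) + 1\<close>
      by (intro Bcond_next_rank_iff fin') simp_all
    also have "\<dots> \<longleftrightarrow> interleave_in_strip Z' Z C A"
      unfolding interleave_in_strip_iff[OF fin'(3,1)] counts by auto
    finally show ?thesis
      using False by (simp add: L L')
  qed
qed

section \<open>Symmetric differences of paths in a strip\<close>

lemma even_count_ge_sym_diff:
  assumes "finite A" "finite B"
  shows "even (count_ge (sym_diff A B) x + count_ge A x + count_ge B x)"
proof -
  have fin: "finite (sym_diff A B)" "finite (A \<inter> B)"
    using assms by auto
  have "sym_diff A B \<union> (A \<inter> B) = A \<union> B" "sym_diff A B \<inter> (A \<inter> B) = {}"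
    by auto
  then have "count_ge (sym_diff A B) x + count_ge (A \<inter> B) x = count_ge (A \<union> B) x"
    using count_ge_add[OF fin, of x] by (simp add: count_ge_def)
  then have "count_ge (sym_diff A B) x + count_ge A x + count_ge B x = 2 * count_ge (A \<union> B) x"
    using count_ge_add[OF assms, of x] by linarith
  then show ?thesis
    by simp
qed

lemma even_count_ge_sym_diff3:
  assumes "finite S1" "finite S2" "finite S3"
  shows "even (count_ge (sym_diff (sym_diff S1 S2) S3) x +
    count_ge S1 x + count_ge S2 x + count_ge S3 x)"
proof -
  let ?S12 = "sym_diff S1 S2"
  have "even ((count_ge (sym_diff ?S12 S3) x + count_ge ?S12 x + count_ge S3 x) +
      (count_ge ?S12 x + count_ge S1 x + count_ge S2 x))"
    using even_count_ge_sym_diff[of ?S12 S3 x] even_count_ge_sym_diff[of S1 S2 x] assms by simp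
  then show ?thesis
    by simp argo
qed

lemma parity_pick:
  fixes b b1 b2 b3 :: nat
  assumes "b \<le> 1" "b1 \<le> 1" "b2 \<le> 1" "b3 \<le> 1" "even (b + b1 + b2 + b3)"
  shows "b = b1 \<or> b = b2 \<or> b = b3"
  using assms by (auto simp: le_Suc_eq)

text \<open>Either the three paths step in lockstep, and parity makes w step with them, or the lower
  path drops by one over two steps, which squeezes all values at t into {l1, l1 + 1}; there
  parity forces w to equal one of w1, w2, w3.\<close>

lemma xor3_path_step:
  fixes l0 l1 l2 w w' w1 w2 w3 w1' w2' w3' :: nat
  assumes prev: "w' = w1' \<or> w' = w2' \<or> w' = w3'"
    and steps: "w' \<le> w" "w \<le> w' + 1" "w1' \<le> w1" "w1 \<le> w1' + 1"
      "w2' \<le> w2" "w2 \<le> w2' + 1" "w3' \<le> w3" "w3 \<le> w3' + 1"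
    and parity: "even (w + w1 + w2 + w3)" "even (w' + w1' + w2' + w3')"
    and strip: "l0 \<le> w1" "w1 \<le> l1 + 1" "l1 \<le> w1'" "w1' \<le> l2 + 1"
      "l0 \<le> w2" "w2 \<le> l1 + 1" "l1 \<le> w2'" "w2' \<le> l2 + 1"
      "l0 \<le> w3" "w3 \<le> l1 + 1" "l1 \<le> w3'" "w3' \<le> l2 + 1"
    and rigid: "(w1 + w2' = w2 + w1' \<and> w2 + w3' = w3 + w2') \<or> l0 = l2 + 1"
  shows "w = w1 \<or> w = w2 \<or> w = w3"
  using rigid
proof
  assume equal_steps: "w1 + w2' = w2 + w1' \<and> w2 + w3' = w3 + w2'"
  define s where "s = w1 - w1'"
  define d where "d = w - w'"
  have s: "w1 = w1' + s" "w2 = w2' + s" "w3 = w3' + s" "s \<le> 1"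
    using equal_steps steps(3,4) unfolding s_def by linarith+
  have d: "w = w' + d" "d \<le> 1"
    using steps(1,2) unfolding d_def by linarith+
  have "even (d + s)"
    using parity unfolding s(1-3) d(1) by simp argo
  then have "d = s"
    using d(2) s(4) by (auto simp: le_Suc_eq)
  then show ?thesis
    using prev s d by auto
next
  assume "l0 = l2 + 1"
  have prev_bounds: "l1 \<le> w'" "w' \<le> l1 + 1" "w' \<le> l2 + 1"
    using prev steps strip by (elim disjE; linarith)+
  have "w \<le> l1 + 1"
  proof (rule ccontr)
    assume "\<not> w \<le> l1 + 1"
    then have "w = l1 + 2" "l1 \<le> l2"
      using prev_bounds steps(2) by linarith+
    then have "w1 = l1 + 1" "w2 = l1 + 1" "w3 = l1 + 1"
      using \<open>l0 = l2 + 1\<close> strip by linarith+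
    then show False
      using parity(1) unfolding \<open>w = l1 + 2\<close> by simp
  qed
  then obtain b b1 b2 b3 where b: "w = l1 + b" "w1 = l1 + b1" "w2 = l1 + b2" "w3 = l1 + b3"
    and "b \<le> 1" "b1 \<le> 1" "b2 \<le> 1" "b3 \<le> 1"
    using prev_bounds steps strip by (metis add_le_cancel_left le_add_diff_inverse le_trans)
  moreover have "even (b + b1 + b2 + b3)"
    using parity(1) unfolding b by simp argo
  ultimately show ?thesis
    using parity_pick by auto
qed

lemma in_strip_count_ge_sym_diff3:
  fixes L :: "nat \<Rightarrow> nat" and S1 S2 S3 :: "nat set"
  assumes fin: "finite S1" "finite S2" "finite S3"
    and rigid: "\<And>t. ((t \<in> S1 \<longleftrightarrow> t \<in> S2) \<and> (t \<in> S2 \<longleftrightarrow> t \<in> S3)) \<or> L t = L (Suc (Suc t)) + 1"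
    and strip: "in_strip L (count_ge S1)" "in_strip L (count_ge S2)" "in_strip L (count_ge S3)"
  shows "in_strip L (count_ge (sym_diff (sym_diff S1 S2) S3))"
proof -
  define S where "S = sym_diff (sym_diff S1 S2) S3"
  have "finite S"
    using fin by (simp add: S_def)
  have "\<forall>\<^sub>F t in sequentially. count_ge S t = count_ge S1 t"
    using eventually_conj[OF eventually_count_ge_eq_0[OF \<open>finite S\<close>] eventually_count_ge_eq_0[OF fin(1)]]
    by (rule eventually_mono) simp
  then obtain T where top: "\<And>t. T \<le> t \<Longrightarrow> count_ge S t = count_ge S1 t"
    by (auto simp: eventually_sequentially)
  have "count_ge S t = count_ge S1 t \<or> count_ge S t = count_ge S2 t \<or> count_ge S t = count_ge S3 t" for t
    \<comment> \<open>descending from where all count functions vanish\<close>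
  proof (induction t rule: nat_descend_induct[where n = T])
    case (base k)
    then show ?case
      using top by simp
  next
    case (descend k)
    have unit: "count_ge X (Suc k) \<le> count_ge X k" "count_ge X k \<le> count_ge X (Suc k) + 1"
      if "finite X" for X
      using count_ge_Suc[OF that, of k] by simp_all
    have strip_at: "L j \<le> count_ge X j" "count_ge X j \<le> L (Suc j) + 1"
      if "in_strip L (count_ge X)" for X j
      using that by (simp_all add: in_strip_def)
    have "(count_ge S1 k + count_ge S2 (Suc k) = count_ge S2 k + count_ge S1 (Suc k) \<and>
           count_ge S2 k + count_ge S3 (Suc k) = count_ge S3 k + count_ge S2 (Suc k)) \<or>
          L k = L (Suc (Suc k)) + 1"
      using rigid[of k] count_ge_Suc[OF fin(1), of k] count_ge_Suc[OF fin(2), of k]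
        count_ge_Suc[OF fin(3), of k] by auto
    then show ?case
      using xor3_path_step[OF descend(2)[of "Suc k"] unit[OF \<open>finite S\<close>] unit[OF fin(1)] unit[OF fin(2)]
          unit[OF fin(3)] even_count_ge_sym_diff3[OF fin, of k, folded S_def]
          even_count_ge_sym_diff3[OF fin, of "Suc k", folded S_def]
          strip_at[OF strip(1), of k] strip_at[OF strip(1), of "Suc k"]
          strip_at[OF strip(2), of k] strip_at[OF strip(2), of "Suc k"]
          strip_at[OF strip(3), of k] strip_at[OF strip(3), of "Suc k"]]
      by simp
  qed
  then show ?thesis
    using strip unfolding S_def[symmetric] in_strip_def by metis
qed

section \<open>Moving entries of symbols\<close>

lemma fst_move: "M \<subseteq> singles Z \<Longrightarrow> fst (move Z M) = sym_diff (fst Z) M"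
  by (auto simp: move_def singles_def)

lemma finite_move:
  "finite (fst Z) \<Longrightarrow> finite (snd Z) \<Longrightarrow> finite (fst (move Z M)) \<and> finite (snd (move Z M))"
  by (simp add: move_def)

lemma total_count_Suc_single:
  assumes "finite (fst Z)" "finite (snd Z)" "x \<in> singles Z"
  shows "total_count Z x = total_count Z (Suc x) + 1"
  using count_ge_Suc[OF assms(1), of x] count_ge_Suc[OF assms(2), of x] assms(3)
  by (auto simp: total_count_def singles_def)

lemma interleave_in_strip_sym_diff3:
  fixes Z Z' :: symbol and P1 P2 P3 Q1 Q2 Q3 :: "nat set"
  assumes fin: "finite (fst Z)" "finite (snd Z)" "finite (fst Z')" "finite (snd Z')"
    and P: "P1 \<subseteq> singles Z" "P2 \<subseteq> singles Z" "P3 \<subseteq> singles Z"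
    and Q: "Q1 \<subseteq> singles Z'" "Q2 \<subseteq> singles Z'" "Q3 \<subseteq> singles Z'"
    and strip: "interleave_in_strip Z Z' (fst (move Z P1)) (fst (move Z' Q1))"
      "interleave_in_strip Z Z' (fst (move Z P2)) (fst (move Z' Q2))"
      "interleave_in_strip Z Z' (fst (move Z P3)) (fst (move Z' Q3))"
  shows "interleave_in_strip Z Z' (fst (move Z (sym_diff (sym_diff P1 P2) P3)))
    (fst (move Z' (sym_diff (sym_diff Q1 Q2) Q3)))"
proof -
  define S where "S P Q = interleave (fst (move Z P)) (fst (move Z' Q))" for P Q
  have mem_S: "t \<in> S P Q \<longleftrightarrow>
      (if even t then (t div 2 \<in> fst Z) \<noteq> (t div 2 \<in> P) else (t div 2 \<in> fst Z') \<noteq> (t div 2 \<in> Q))"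
    if "P \<subseteq> singles Z" "Q \<subseteq> singles Z'" for P Q t
    using that by (auto simp: S_def mem_interleave fst_move)
  have P123: "sym_diff (sym_diff P1 P2) P3 \<subseteq> singles Z" and Q123: "sym_diff (sym_diff Q1 Q2) Q3 \<subseteq> singles Z'"
    using P Q by auto
  have "S (sym_diff (sym_diff P1 P2) P3) (sym_diff (sym_diff Q1 Q2) Q3) =
      sym_diff (sym_diff (S P1 Q1) (S P2 Q2)) (S P3 Q3)"
    using mem_S[OF P123 Q123] mem_S[OF P(1) Q(1)] mem_S[OF P(2) Q(2)] mem_S[OF P(3) Q(3)]
    by (auto split: if_splits)
  moreover have "finite (S P Q)" for P Q
    using fin by (simp add: S_def interleave_def move_def)
  moreover have "((t \<in> S P1 Q1 \<longleftrightarrow> t \<in> S P2 Q2) \<and> (t \<in> S P2 Q2 \<longleftrightarrow> t \<in> S P3 Q3)) \<or>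
      lower_path Z Z' t = lower_path Z Z' (Suc (Suc t)) + 1" for t
    \<comment> \<open>moves only toggle singles, and at a single the total count drops by exactly one\<close>
  proof (cases "even t")
    case True
    then show ?thesis
      using mem_S[OF P(1) Q(1)] mem_S[OF P(2) Q(2)] mem_S[OF P(3) Q(3)] P
        total_count_Suc_single[OF fin(1,2), of "t div 2"]
      by (cases "t div 2 \<in> singles Z") (auto simp: lower_path_def)
  next
    case False
    then show ?thesis
      using mem_S[OF P(1) Q(1)] mem_S[OF P(2) Q(2)] mem_S[OF P(3) Q(3)] Q
        total_count_Suc_single[OF fin(3,4), of "t div 2"]
      by (cases "t div 2 \<in> singles Z'") (auto simp: lower_path_def)
  qed
  ultimately show ?thesis
    using in_strip_count_ge_sym_diff3 strip unfolding interleave_in_strip_def S_def by metis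
qed

definition interlaced :: "symbol \<Rightarrow> bool" where
  "interlaced Z \<longleftrightarrow>
    (\<forall>x. count_ge (snd Z) x \<le> count_ge (fst Z) x \<and> count_ge (fst Z) x \<le> count_ge (snd Z) x + 1)"

lemma special1_interlaced: "special1 Z \<Longrightarrow> interlaced Z"
  unfolding special1_def interlaced_def
  using entry_shift_le_bounded_left[of 0 "snd Z" "fst Z"] entry_shift_le_bounded_right[of "fst Z" "snd Z" 1]
    entry_shift_le_iff[of "snd Z" "fst Z" 0] entry_shift_le_iff[of "fst Z" "snd Z" 1]
  by auto

lemma special0_interlaced: "special0 Z \<Longrightarrow> interlaced Z"
  unfolding special0_def interlaced_def
  using entry_shift_le_bounded_left[of 0 "snd Z" "fst Z"] entry_shift_le_bounded_left[of 1 "fst Z" "snd Z"]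
    entry_shift_le_iff[of "snd Z" "fst Z" 0] entry_shift_le_iff[of "fst Z" "snd Z" 1]
  by (auto simp: Suc_le_eq)

text \<open>For interlaced symbols the top-row count is the upper half of the total count, and the path
  built from these halves fits into the strip as soon as any path does.\<close>

lemma interleave_in_strip_top_rows:
  assumes fin: "finite (fst Z)" "finite (fst Z')" "finite A" "finite C"
    and interlaced: "interlaced Z" "interlaced Z'"
    and "interleave_in_strip Z Z' A C"
  shows "interleave_in_strip Z Z' (fst Z) (fst Z')"
proof -
  have path: "total_count Z x \<le> total_count Z' x + 1" "total_count Z' x \<le> total_count Z (Suc x) + 1" for x
    using \<open>interleave_in_strip Z Z' A C\<close> unfolding interleave_in_strip_iff[OF fin(3,4)]
    by (meson le_trans)+
  have half: "total_count Y x \<le> 2 * count_ge (fst Y) x" "2 * count_ge (fst Y) x \<le> total_count Y x + 1"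
    if "interlaced Y" for Y x
    using that by (auto simp: interlaced_def total_count_def)
  show ?thesis
    unfolding interleave_in_strip_iff[OF fin(1,2)]
  proof (intro allI conjI)
    fix x
    show "total_count Z x \<le> count_ge (fst Z) x + count_ge (fst Z') x"
      using path(1)[of x] half[OF interlaced(1), of x] half[OF interlaced(2), of x] by linarith
    show "count_ge (fst Z) x + count_ge (fst Z') x \<le> total_count Z' x + 1"
      using path(1)[of x] half[OF interlaced(1), of x] half[OF interlaced(2), of x] by linarith
    show "total_count Z' x \<le> count_ge (fst Z) (Suc x) + count_ge (fst Z') x"
      using path(2)[of x] half[OF interlaced(1), of "Suc x"] half[OF interlaced(2), of x] by linarith
    show "count_ge (fst Z) (Suc x) + count_ge (fst Z') x \<le> total_count Z (Suc x) + 1"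
      using path(2)[of x] half[OF interlaced(1), of "Suc x"] half[OF interlaced(2), of x] by linarith
  qed
qed

text \<open>A relation closed under ternary symmetric differences and containing the pair of empty
  sets is a linear subspace over the two-element field, so its fibres are translates of the fibre
  over the empty set.\<close>

lemma sym_diff3_closed_fiber:
  assumes closed: "\<And>P1 Q1 P2 Q2 P3 Q3. R P1 Q1 \<Longrightarrow> R P2 Q2 \<Longrightarrow> R P3 Q3 \<Longrightarrow>
      R (sym_diff (sym_diff P1 P2) P3) (sym_diff (sym_diff Q1 Q2) Q3)"
    and "R {} {}" "R P0 Q0"
  shows "{Q. R P0 Q} = (\<lambda>Q. sym_diff Q0 Q) ` {Q. R {} Q}"
proof (intro set_eqI iffI)
  fix Q
  assume "Q \<in> {Q. R P0 Q}"
  then have "R {} (sym_diff Q0 Q)"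
    using closed[OF \<open>R P0 Q0\<close> _ \<open>R {} {}\<close>, of P0 Q] by (simp add: Diff_eq Un_commute)
  moreover have "Q = sym_diff Q0 (sym_diff Q0 Q)"
    by auto
  ultimately show "Q \<in> (\<lambda>Q. sym_diff Q0 Q) ` {Q. R {} Q}"
    by blast
next
  fix Q
  assume "Q \<in> (\<lambda>Q. sym_diff Q0 Q) ` {Q. R {} Q}"
  then obtain Q' where "R {} Q'" "Q = sym_diff Q0 Q'"
    by blast
  then show "Q \<in> {Q. R P0 Q}"
    using closed[OF \<open>R P0 Q0\<close> \<open>R {} Q'\<close> \<open>R {} {}\<close>] by simp
qed

definition Brel :: "symbol \<Rightarrow> symbol \<Rightarrow> nat set \<Rightarrow> nat set \<Rightarrow> bool" where
  "Brel Z Z' P Q \<longleftrightarrow> P \<subseteq> singles Z \<and> Q \<subseteq> singles Z' \<and>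
    Bcond (card (snd Z)) (card (snd Z')) (move Z P) (move Z' Q)"

lemma mem_Bbar_iff: "(X, Y) \<in> Bbar Z Z' \<longleftrightarrow> (\<exists>P Q. X = move Z P \<and> Y = move Z' Q \<and> Brel Z Z' P Q)"
  by (auto simp: Bbar_def Sbar_def Brel_def)

lemma moved_set_move: "M \<subseteq> singles Z \<Longrightarrow> moved_set Z (move Z M) = M"
  by (auto simp: moved_set_def move_def singles_def)

lemma move_inj:
  assumes "P \<subseteq> singles Z" "Q \<subseteq> singles Z" "move Z P = move Z Q"
  shows "P = Q"
  using assms moved_set_move by metis

lemma sym_sum_move:
  assumes "P \<subseteq> singles Z" "Q \<subseteq> singles Z"
  shows "sym_sum Z (move Z P) (move Z Q) = move Z (sym_diff P Q)"
proof -
  have "(P \<union> Q) - (P \<inter> Q) = sym_diff P Q"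
    by auto
  then show ?thesis
    using assms by (simp add: sym_sum_def moved_set_move)
qed

lemma move_empty [simp]: "move Z {} = Z"
  by (simp add: move_def)

locale special_pair =
  fixes Z Z' :: symbol
  assumes special1: "special1 Z" and special0: "special0 Z'"
    and ranks: "card (snd Z') = card (snd Z) \<or> card (snd Z') = card (snd Z) + 1"
begin

lemma finite_rows: "finite (fst Z)" "finite (snd Z)" "finite (fst Z')" "finite (snd Z')"
  using special1 special0 by (auto simp: special1_def special0_def)

lemma card_rows: "card (fst Z) = card (snd Z) + 1" "card (fst Z') = card (snd Z')"
  using special1 special0 by (auto simp: special1_def special0_def)

lemma Brel_iff:
  assumes "P \<subseteq> singles Z" "Q \<subseteq> singles Z'"
  shows "Brel Z Z' P Q \<longleftrightarrow>
    (if card (snd Z') = card (snd Z)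
     then interleave_in_strip Z Z' (fst (move Z P)) (fst (move Z' Q))
     else interleave_in_strip Z' Z (fst (move Z' Q)) (fst (move Z P)))"
proof -
  have "Bcond (card (snd Z)) (card (snd Z')) (move Z P) (move Z' Q) \<longleftrightarrow>
    (if card (snd Z') = card (snd Z)
     then interleave_in_strip Z Z' (fst (move Z P)) (fst (move Z' Q))
     else interleave_in_strip Z' Z (fst (move Z' Q)) (fst (move Z P)))"
    using finite_move[OF finite_rows(1,2)] finite_move[OF finite_rows(3,4)]
      total_count_move[OF assms(1) finite_rows(1,2)] total_count_move[OF assms(2) finite_rows(3,4)]
    by (intro Bcond_iff_interleave_in_strip card_rows ranks) simp_all
  then show ?thesis
    unfolding Brel_def using assms by blast
qed

lemma Brel_sym_diff3:
  assumes "Brel Z Z' P1 Q1" "Brel Z Z' P2 Q2" "Brel Z Z' P3 Q3"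
  shows "Brel Z Z' (sym_diff (sym_diff P1 P2) P3) (sym_diff (sym_diff Q1 Q2) Q3)"
proof -
  have P: "P1 \<subseteq> singles Z" "P2 \<subseteq> singles Z" "P3 \<subseteq> singles Z"
    and Q: "Q1 \<subseteq> singles Z'" "Q2 \<subseteq> singles Z'" "Q3 \<subseteq> singles Z'"
    using assms by (simp_all add: Brel_def)
  then have "sym_diff (sym_diff P1 P2) P3 \<subseteq> singles Z" "sym_diff (sym_diff Q1 Q2) Q3 \<subseteq> singles Z'"
    by auto
  then show ?thesis
    using assms Brel_iff P Q
      interleave_in_strip_sym_diff3[OF finite_rows P Q]
      interleave_in_strip_sym_diff3[OF finite_rows(3,4,1,2) Q P]
    by (simp split: if_splits)
qed

lemma Brel_empty:
  assumes "Dset Z Z' \<noteq> {}"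
  shows "Brel Z Z' {} {}"
proof -
  obtain P Q where "Brel Z Z' P Q"
    using assms by (auto simp: Dset_def mem_Bbar_iff)
  then have PQ: "P \<subseteq> singles Z" "Q \<subseteq> singles Z'"
    by (simp_all add: Brel_def)
  have fin: "finite (fst (move Z P))" "finite (fst (move Z' Q))"
    using finite_move[OF finite_rows(1,2)] finite_move[OF finite_rows(3,4)] by simp_all
  note interlaced = special1_interlaced[OF special1] special0_interlaced[OF special0]
  show ?thesis
  proof (cases "card (snd Z') = card (snd Z)")
    case True
    with \<open>Brel Z Z' P Q\<close> have "interleave_in_strip Z Z' (fst (move Z P)) (fst (move Z' Q))"
      using Brel_iff[OF PQ] by simp
    then have "interleave_in_strip Z Z' (fst Z) (fst Z')"
      by (rule interleave_in_strip_top_rows[OF finite_rows(1,3) fin interlaced])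
    then show ?thesis
      using Brel_iff[of "{}" "{}"] True by simp
  next
    case False
    with \<open>Brel Z Z' P Q\<close> have "interleave_in_strip Z' Z (fst (move Z' Q)) (fst (move Z P))"
      using Brel_iff[OF PQ] by simp
    then have "interleave_in_strip Z' Z (fst Z') (fst Z)"
      by (rule interleave_in_strip_top_rows[OF finite_rows(3,1) fin(2,1) interlaced(2,1)])
    then show ?thesis
      using Brel_iff[of "{}" "{}"] False by simp
  qed
qed

lemma defect_move_Z': "Brel Z Z' P Q \<Longrightarrow> defect (move Z' Q) = 1 - defect (move Z P)"
  by (simp add: Brel_def Bcond_def)

lemma defect_Z: "defect Z = 1" and defect_Z': "defect Z' = 0"
  using card_rows by (simp_all add: defect_def)

lemma mem_D_Z_iff: "Y \<in> D_Z Z Z' \<longleftrightarrow> (\<exists>Q. Y = move Z' Q \<and> Brel Z Z' {} Q)"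
proof
  assume "Y \<in> D_Z Z Z'"
  then obtain P Q where "Z = move Z P" "Y = move Z' Q" "Brel Z Z' P Q"
    by (auto simp: D_Z_def Dset_def mem_Bbar_iff)
  moreover have "P = {}"
    using move_inj[of P Z "{}"] calculation by (simp add: Brel_def)
  ultimately show "\<exists>Q. Y = move Z' Q \<and> Brel Z Z' {} Q"
    by blast
next
  assume "\<exists>Q. Y = move Z' Q \<and> Brel Z Z' {} Q"
  then obtain Q where "Y = move Z' Q" "Brel Z Z' {} Q"
    by blast
  then show "Y \<in> D_Z Z Z'"
    using mem_Bbar_iff[of Z Y Z Z'] defect_move_Z'[of "{}" Q] defect_Z
    by (force simp: D_Z_def Dset_def Sdef_def Bbar_def)
qed

lemma mem_D_Z'_iff: "X \<in> D_Z' Z Z' \<longleftrightarrow> (\<exists>P. X = move Z P \<and> Brel Z Z' P {})"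
proof
  assume "X \<in> D_Z' Z Z'"
  then obtain P Q where "X = move Z P" "Z' = move Z' Q" "Brel Z Z' P Q"
    by (auto simp: D_Z'_def Dset_def mem_Bbar_iff)
  moreover have "Q = {}"
    using move_inj[of Q Z' "{}"] calculation by (simp add: Brel_def)
  ultimately show "\<exists>P. X = move Z P \<and> Brel Z Z' P {}"
    by blast
next
  assume "\<exists>P. X = move Z P \<and> Brel Z Z' P {}"
  then obtain P where "X = move Z P" "Brel Z Z' P {}"
    by blast
  then show "X \<in> D_Z' Z Z'"
    using mem_Bbar_iff[of X Z' Z Z'] defect_move_Z'[of P "{}"] defect_Z'
    by (force simp: D_Z'_def Dset_def Sdef_def Bbar_def)
qed

lemma Bplus_left_eq:
  assumes "Dset Z Z' \<noteq> {}" and "L0' \<in> Bplus_left Z Z' L"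
  shows "Bplus_left Z Z' L = {sym_sum Z' L0' L' | L'. L' \<in> D_Z Z Z'}"
proof -
  obtain P0 Q0 where L: "L = move Z P0" and L0': "L0' = move Z' Q0" and "Brel Z Z' P0 Q0"
    using assms(2) by (auto simp: Bplus_left_def mem_Bbar_iff)
  have "Bplus_left Z Z' L = move Z' ` {Q. Brel Z Z' P0 Q}"
    using move_inj[of _ Z P0] \<open>Brel Z Z' P0 Q0\<close>
    by (auto simp: Bplus_left_def mem_Bbar_iff L Brel_def)
  also have "\<dots> = move Z' ` (\<lambda>Q. sym_diff Q0 Q) ` {Q. Brel Z Z' {} Q}"
    using sym_diff3_closed_fiber[of "Brel Z Z'", OF Brel_sym_diff3 Brel_empty[OF assms(1)]
        \<open>Brel Z Z' P0 Q0\<close>] by simp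
  also have "\<dots> = (\<lambda>Q. sym_sum Z' L0' (move Z' Q)) ` {Q. Brel Z Z' {} Q}"
    unfolding image_image L0' using \<open>Brel Z Z' P0 Q0\<close>
    by (intro image_cong) (auto simp: Brel_def sym_sum_move)
  also have "\<dots> = {sym_sum Z' L0' L' | L'. L' \<in> D_Z Z Z'}"
    unfolding mem_D_Z_iff by blast
  finally show ?thesis .
qed

lemma Bplus_right_eq:
  assumes "Dset Z Z' \<noteq> {}" and "L0 \<in> Bplus_right Z Z' L'"
  shows "Bplus_right Z Z' L' = {sym_sum Z L0 L | L. L \<in> D_Z' Z Z'}"
proof -
  obtain P0 Q0 where L0: "L0 = move Z P0" and L': "L' = move Z' Q0" and "Brel Z Z' P0 Q0"
    using assms(2) by (auto simp: Bplus_right_def mem_Bbar_iff)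
  have "Bplus_right Z Z' L' = move Z ` {P. Brel Z Z' P Q0}"
    using move_inj[of _ Z' Q0] \<open>Brel Z Z' P0 Q0\<close>
    by (auto simp: Bplus_right_def mem_Bbar_iff L' Brel_def)
  also have "\<dots> = move Z ` (\<lambda>P. sym_diff P0 P) ` {P. Brel Z Z' P {}}"
    using sym_diff3_closed_fiber[of "\<lambda>Q P. Brel Z Z' P Q", OF Brel_sym_diff3 Brel_empty[OF assms(1)]
        \<open>Brel Z Z' P0 Q0\<close>] by simp
  also have "\<dots> = (\<lambda>P. sym_sum Z L0 (move Z P)) ` {P. Brel Z Z' P {}}"
    unfolding image_image L0 using \<open>Brel Z Z' P0 Q0\<close>
    by (intro image_cong) (auto simp: Brel_def sym_sum_move)
  also have "\<dots> = {sym_sum Z L0 L | L. L \<in> D_Z' Z Z'}"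
    unfolding mem_D_Z'_iff by blast
  finally show ?thesis .
qed

end

theorem proposition0810:
  fixes Z Z' :: symbol
  assumes "special1 Z" and "special0 Z'"
    and "card (snd Z') = card (snd Z) \<or> card (snd Z') = card (snd Z) + 1"
    and "Dset Z Z' \<noteq> {}"
  shows "(\<forall>L L0'. L \<in> Sbar Z \<and> L0' \<in> Bplus_left Z Z' L \<longrightarrow>
            Bplus_left Z Z' L = {sym_sum Z' L0' L' | L'. L' \<in> D_Z Z Z'})
       \<and> (\<forall>L' L0. L' \<in> Sbar Z' \<and> L0 \<in> Bplus_right Z Z' L' \<longrightarrow>
            Bplus_right Z Z' L' = {sym_sum Z L0 L | L. L \<in> D_Z' Z Z'})"
proof -
  interpret special_pair Z Z'
    using assms(1-3) by unfold_locales
  show ?thesis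
    using Bplus_left_eq[OF assms(4)] Bplus_right_eq[OF assms(4)] by blast
qed

end
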